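(* Let $n,\nu$, $0=n_0<n_1<\cdots<n_\nu=n$, and $\bm h\in\mathbb{N}^n$ be as in the context, with $\bm h$ block monotone. Let $l:[0,1]\to[0,\infty)$ and $r,a,d:[0,1]\to\mathbb{N}$ be measurable with $(r(x),a(x),d(x))\in\mathcal{S}$ for all $x$ and $\int_0^1 l(x)r(x)\,dx<\infty$, and write $\mathcal{R}^c=\{(l(x),r(x),a(x),d(x)):x\in[0,1]\}$. Then $\bm h$ is adequate for $\mathcal{R}^c$ if and only if $W^c_{k_1\cdots k_\nu}(\bm h,\mathcal{R}^c)\ge0$ for every integer tuple $(k_1,\dots,k_\nu)$ with $0\le k_\kappa\le n_\kappa-n_{\kappa-1}$ for all $\kappa$.
   Context: Integers $0=n_0<n_1<\dots<n_\nu=n$ are fixed ($1\le\nu\le n$). The service set is $\mathcal{S}=\{(r,a,d)\in\mathbb{N}^3: a<d\le\nu,\ 0<r\le n_d-n_a\}$; service $(r,a,d)$ means one unit of power per unit of load in exactly $r$ of the slots $n_a+1,\dots,n_d$. $\bm h=(h_1,\dots,h_n)\in\mathbb{N}^n$ is block monotone: for each $\kappa$, $h_i\ge h_j$ whenever $n_{\kappa-1}+1\le i<j\le n_\kappa$. A continuum of consumers is indexed by $x\in[0,1]$; consumers in $[x,x+dx]$ demand $l(x)\,dx$ units/slot of power for $r(x)$ slots among slots $n_{a(x)}+1,\dots,n_{d(x)}$. Adequacy of $\bm h$ for $\mathcal{R}^c$ means: there exists a measurable $A:[0,1]\times\{1,\dots,n\}\to[0,1]$ with $A(x,j)=0$ for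 $j\notin\{n_{a(x)}+1,\dots,n_{d(x)}\}$, $\sum_{j=1}^nA(x,j)=r(x)$ for all $x$, and $\int_0^1 l(x)A(x,j)\,dx\le h_j$ for all $j$. With $[t]^+=\max\{t,0\}$, $$W^c_{k_1\cdots k_\nu}(\bm h,\mathcal{R}^c)=\sum_{\kappa=1}^{\nu}\sum_{j=n_{\kappa-1}+k_\kappa+1}^{n_\kappa}h_j-\int_0^1 l(x)\Big[r(x)-\sum_{\kappa=a(x)+1}^{d(x)}k_\kappa\Big]^+dx.$$ *)

theory Defs
  imports "HOL-Analysis.Analysis"
begin

text \<open>Time slots are 1..n; the block boundaries are N 0 = 0 < N 1 < ... < N nu = n.
  Consumers are indexed by x in [0,1] with Lebesgue measure.\<close>

definition unitI :: "real measure" where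
  "unitI = restrict_space lebesgue {0..1}"

definition in_services :: "(nat \<Rightarrow> nat) \<Rightarrow> nat \<Rightarrow> nat \<times> nat \<times> nat \<Rightarrow> bool" where
  "in_services N nu = (\<lambda>(r, a, d). a < d \<and> d \<le> nu \<and> 0 < r \<and> r \<le> N d - N a)"

definition block_monotone :: "(nat \<Rightarrow> nat) \<Rightarrow> nat \<Rightarrow> (nat \<Rightarrow> nat) \<Rightarrow> bool" where
  "block_monotone N nu h =
     (\<forall>\<kappa>\<in>{1..nu}. \<forall>i j. N (\<kappa> - 1) + 1 \<le> i \<and> i < j \<and> j \<le> N \<kappa> \<longrightarrow> h j \<le> h i)"

definition adequate ::
  "(nat \<Rightarrow> nat) \<Rightarrow> nat \<Rightarrow> (nat \<Rightarrow> nat) \<Rightarrow> (real \<Rightarrow> real) \<Rightarrow> (real \<Rightarrow> nat)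
     \<Rightarrow> (real \<Rightarrow> nat) \<Rightarrow> (real \<Rightarrow> nat) \<Rightarrow> bool" where
  "adequate N n h l r a d =
    (\<exists>A :: real \<Rightarrow> nat \<Rightarrow> real.
       (\<lambda>(x, j). A x j) \<in> borel_measurable (unitI \<Otimes>\<^sub>M count_space {1..n}) \<and>
       (\<forall>x\<in>{0..1}. \<forall>j\<in>{1..n}. 0 \<le> A x j \<and> A x j \<le> 1) \<and>
       (\<forall>x\<in>{0..1}. \<forall>j\<in>{1..n}. j \<notin> {N (a x) + 1 .. N (d x)} \<longrightarrow> A x j = 0) \<and>
       (\<forall>x\<in>{0..1}. (\<Sum>j=1..n. A x j) = real (r x)) \<and>
       (\<forall>j\<in>{1..n}. (\<integral>x. l x * A x j \<partial>unitI) \<le> real (h j)))"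

definition Wc ::
  "(nat \<Rightarrow> nat) \<Rightarrow> nat \<Rightarrow> (nat \<Rightarrow> nat) \<Rightarrow> (nat \<Rightarrow> nat) \<Rightarrow> (real \<Rightarrow> real) \<Rightarrow> (real \<Rightarrow> nat)
     \<Rightarrow> (real \<Rightarrow> nat) \<Rightarrow> (real \<Rightarrow> nat) \<Rightarrow> real" where
  "Wc N nu k h l r a d =
     (\<Sum>\<kappa>=1..nu. \<Sum>j = N (\<kappa> - 1) + k \<kappa> + 1 .. N \<kappa>. real (h j))
     - (\<integral>x. l x * max 0 (real (r x) - real (\<Sum>\<kappa> = a x + 1 .. d x. k \<kappa>)) \<partial>unitI)"

end

theory Submission
  imports Defs
begin

text \<open>Necessity: a consumer of type (r, a, d) holds at most one unit per slot, so at least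
  r - (k(a+1) + ... + k(d)) of its units lie in the tails of the blocks, the slots after the
  first k(\<kappa>) slots of block \<kappa>; integrating against the capacities gives W \<ge> 0.

  Sufficiency: consumers with equal (r, a, d) can be served alike, which reduces adequacy to a
  fractional assignment problem for finitely many demand classes. Minimise the sum of squared
  overloads over the compact set of assignments. If the minimiser overloads the set T of slots,
  every class that still feeds T has filled all its slots outside T (otherwise moving load would
  decrease the potential), so T is a violated cut. With k(\<kappa>) the number of slots of block \<kappa>
  outside T, block monotonicity of h bounds the tail capacities by the capacity of T, and then
  W < 0 for this k.\<close>

lemma sum_blocks:
  fixes f :: "nat \<Rightarrow> 'b::comm_monoid_add" and N :: "nat \<Rightarrow> nat" and a d :: nat
  assumes "a \<le> d" and "mono_on {a..d} N"
  shows "sum f ({N a + 1..N d} \<inter> X) = (\<Sum>\<kappa>=a+1..d. sum f ({N (\<kappa> - 1) + 1..N \<kappa>} \<inter> X))"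
  using assms
proof (induction d)
  case 0
  then show ?case by simp
next
  case (Suc d)
  show ?case
  proof (cases "a = Suc d")
    case False
    then have "a \<le> d" using Suc.prems by simp
    moreover have "mono_on {a..d} N" using Suc.prems(2) by (rule mono_on_subset) auto
    ultimately have IH: "sum f ({N a + 1..N d} \<inter> X) = (\<Sum>\<kappa>=a+1..d. sum f ({N (\<kappa> - 1) + 1..N \<kappa>} \<inter> X))"
      using Suc.IH by blast
    have "N a \<le> N d" "N d \<le> N (Suc d)"
      using \<open>a \<le> d\<close> by (auto intro: mono_onD[OF Suc.prems(2)])
    then have split: "{N a + 1..N (Suc d)} \<inter> X = ({N a + 1..N d} \<inter> X) \<union> ({N d + 1..N (Suc d)} \<inter> X)"
      by auto
    have "sum f ({N a + 1..N (Suc d)} \<inter> X) = sum f ({N a + 1..N d} \<inter> X) + sum f ({N d + 1..N (Suc d)} \<inter> X)"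
      unfolding split by (rule sum.union_disjoint) auto
    moreover have "{a+1..Suc d} = insert (Suc d) {a+1..d}" using \<open>a \<le> d\<close> by auto
    ultimately show ?thesis using IH by (simp add: ac_simps)
  qed simp
qed

lemma sum_top_le_sum_subset:
  fixes g :: "nat \<Rightarrow> 'a::ordered_comm_monoid_add" and p q :: nat
  assumes "\<And>i j. p + 1 \<le> i \<Longrightarrow> i < j \<Longrightarrow> j \<le> q \<Longrightarrow> g j \<le> g i" and "U \<subseteq> {p+1..q}"
  shows "sum g {q - card U + 1..q} \<le> sum g U"
  using assms
proof (induction q arbitrary: U)
  case 0
  then show ?case by simp
next
  case (Suc q)
  have fin: "finite U" using Suc.prems(2) finite_subset by blast
  show ?case
  proof (cases "Suc q \<in> U")
    case True
    define U' where "U' = U - {Suc q}"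
    have cU: "card U = Suc (card U')" using True fin by (metis U'_def card_Suc_Diff1)
    have "U' \<subseteq> {p+1..q}" using Suc.prems(2) by (auto simp: U'_def le_Suc_eq)
    then have "sum g {q - card U' + 1..q} \<le> sum g U'"
      using Suc.IH Suc.prems(1) by auto
    moreover have "{Suc q - card U + 1..Suc q} = insert (Suc q) {q - card U' + 1..q}"
      using cU by auto
    moreover have "sum g U = g (Suc q) + sum g U'"
      using True fin by (simp add: U'_def sum.remove)
    ultimately show ?thesis by (simp add: add_left_mono)
  next
    case False
    then have U: "U \<subseteq> {p+1..q}" using Suc.prems(2) by (auto simp: subset_iff le_Suc_eq)
    have "card U \<le> q - p" using card_mono[OF _ U] by simp
    then have "sum g {Suc q - card U + 1..Suc q} \<le> sum g {q - card U + 1..q}"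
      unfolding Suc_diff_le[OF order_trans[OF \<open>card U \<le> q - p\<close> diff_le_self]] add_Suc
        sum.shift_bounds_cl_Suc_ivl
      by (intro sum_mono Suc.prems(1)) auto
    also have "\<dots> \<le> sum g U" using Suc.IH[OF _ U] Suc.prems(1) by auto
    finally show ?thesis .
  qed
qed

lemma sum_power2_transfer:
  fixes e :: "'j \<Rightarrow> real"
  assumes "finite J" "j \<in> J" "j' \<in> J" "j \<noteq> j'"
  shows "(\<Sum>i\<in>J. (e i + c * ((if i = j' then 1 else 0) - (if i = j then 1 else 0)))\<^sup>2)
    = (\<Sum>i\<in>J. (e i)\<^sup>2) + 2 * c * (e j' - e j + c)"
proof -
  have "(e i + c * ((if i = j' then 1 else 0) - (if i = j then 1 else 0)))\<^sup>2
      = (e i)\<^sup>2 + (if i = j' then 2 * c * e i + c\<^sup>2 else 0) + (if i = j then c\<^sup>2 - 2 * c * e i else 0)" for i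
    using \<open>j \<noteq> j'\<close> by (auto simp: power2_eq_square algebra_simps)
  then show ?thesis
    using assms by (simp add: sum.distrib algebra_simps power2_eq_square)
qed

section \<open>Fractional assignments of finitely many demand classes\<close>

text \<open>Class s needs R s units, at most one per slot of its window W s; L s is its weight.\<close>

definition fractional_assignments ::
  "'s set \<Rightarrow> ('s \<Rightarrow> 'j set) \<Rightarrow> ('s \<Rightarrow> nat) \<Rightarrow> ('s \<times> 'j \<Rightarrow> real) set" where
  "fractional_assignments S W R =
    {B. (\<forall>s j. B (s, j) \<in> (if s \<in> S \<and> j \<in> W s then {0..1} else {0})) \<and>
        (\<forall>s\<in>S. (\<Sum>j\<in>W s. B (s, j)) = real (R s))}"

definition overload :: "'s set \<Rightarrow> ('s \<Rightarrow> real) \<Rightarrow> ('s \<times> 'j \<Rightarrow> real) \<Rightarrow> ('j \<Rightarrow> real) \<Rightarrow> 'j \<Rightarrow> real"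
  where "overload S L B c j = (\<Sum>s\<in>S. L s * B (s, j)) - c j"

lemma fractional_assignmentsD:
  assumes "B \<in> fractional_assignments S W R"
  shows "s \<in> S \<Longrightarrow> j \<in> W s \<Longrightarrow> 0 \<le> B (s, j) \<and> B (s, j) \<le> 1"
    and "s \<notin> S \<or> j \<notin> W s \<Longrightarrow> B (s, j) = 0"
    and "s \<in> S \<Longrightarrow> (\<Sum>j\<in>W s. B (s, j)) = real (R s)"
  using assms unfolding fractional_assignments_def by (auto dest!: spec[of _ s] spec[of _ j])

lemma compact_fractional_assignments: "compact (fractional_assignments S W R)"
proof -
  define K where "K p = (if fst p \<in> S \<and> snd p \<in> W (fst p) then {0..1} else {0::real})" for p
  have "fractional_assignments S W R
      = PiE UNIV K \<inter> (\<Inter>s\<in>S. {B. (\<Sum>j\<in>W s. B (s, j)) = real (R s)})"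
    by (rule set_eqI) (simp add: fractional_assignments_def K_def PiE_UNIV_domain Pi_iff)
  moreover have "compactin (product_topology (\<lambda>_. euclidean) UNIV) (PiE UNIV K)"
    by (simp add: compactin_PiE K_def)
  then have "compact (PiE UNIV K)" by (simp add: euclidean_product_topology)
  moreover have "closed (\<Inter>s\<in>S. {B. (\<Sum>j\<in>W s. B (s, j)) = real (R s)})"
    by (intro closed_INT ballI closed_Collect_eq continuous_intros continuous_on_product_coordinates)
  ultimately show ?thesis by (simp add: compact_Int_closed)
qed

lemma fractional_assignments_nonempty:
  assumes "\<And>s. s \<in> S \<Longrightarrow> finite (W s) \<and> R s \<le> card (W s)"
  shows "fractional_assignments S W R \<noteq> {}"
proof -
  define B where "B p = (if fst p \<in> S \<and> snd p \<in> W (fst p)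
    then real (R (fst p)) / real (card (W (fst p))) else 0)" for p
  have "B \<in> fractional_assignments S W R"
    unfolding fractional_assignments_def
  proof (intro CollectI conjI allI ballI)
    fix s j
    show "B (s, j) \<in> (if s \<in> S \<and> j \<in> W s then {0..1} else {0})"
      using assms[of s] by (auto simp: B_def divide_le_eq_1)
  next
    fix s assume "s \<in> S"
    then show "(\<Sum>j\<in>W s. B (s, j)) = real (R s)"
      using assms[of s] by (cases "W s = {}") (auto simp: B_def)
  qed
  then show ?thesis by blast
qed

lemma overload_le_at_minimizer:
  fixes L :: "'s \<Rightarrow> real"
  assumes "finite S" "finite J" "s \<in> S" "W s \<subseteq> J"
    and Bm: "Bm \<in> fractional_assignments S W R"
    and min: "\<And>B. B \<in> fractional_assignments S W R \<Longrightarrow>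
      (\<Sum>i\<in>J. (overload S L Bm c i)\<^sup>2) \<le> (\<Sum>i\<in>J. (overload S L B c i)\<^sup>2)"
    and j: "j \<in> W s" and j': "j' \<in> W s"
    and "0 < L s" "0 < Bm (s, j)" "Bm (s, j') < 1"
  shows "overload S L Bm c j \<le> overload S L Bm c j'"
proof (rule ccontr)
  let ?e = "overload S L Bm c"
  assume "\<not> ?thesis"
  then have gap: "?e j' < ?e j" by simp
  then have "j \<noteq> j'" by auto
  \<comment> \<open>Shifting a small amount of class s from slot j to slot j' strictly decreases the potential.\<close>
  define \<delta> where "\<delta> = Min {Bm (s, j), 1 - Bm (s, j'), (?e j - ?e j') / (2 * L s)}"
  have "0 < \<delta>" using assms gap by (simp add: \<delta>_def)
  have \<delta>_le: "\<delta> \<le> Bm (s, j)" "\<delta> \<le> 1 - Bm (s, j')" "\<delta> \<le> (?e j - ?e j') / (2 * L s)"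
    by (auto simp: \<delta>_def)
  from \<delta>_le(3) have "2 * (\<delta> * L s) \<le> ?e j - ?e j'"
    using \<open>0 < L s\<close> by (simp add: pos_le_divide_eq mult.commute mult.left_commute)
  define E where "E i = (if i = j' then 1 else 0) - (if i = j then 1 else (0::real))" for i
  define B where "B p = Bm p + (if fst p = s then \<delta> * E (snd p) else 0)" for p
  have "B \<in> fractional_assignments S W R"
    unfolding fractional_assignments_def
  proof (intro CollectI conjI allI ballI)
    fix s' i
    show "B (s', i) \<in> (if s' \<in> S \<and> i \<in> W s' then {0..1} else {0})"
      using fractional_assignmentsD(1,2)[OF Bm, of s' i] \<delta>_le \<open>0 < \<delta>\<close> \<open>j \<noteq> j'\<close> \<open>s \<in> S\<close> j j'
      by (auto simp: B_def E_def)
  next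
    fix s' assume "s' \<in> S"
    have "finite (W s)" using \<open>finite J\<close> \<open>W s \<subseteq> J\<close> finite_subset by blast
    then have "(\<Sum>i\<in>W s. E i) = 0" using j j' by (simp add: E_def sum_subtractf)
    then show "(\<Sum>i\<in>W s'. B (s', i)) = real (R s')"
      using fractional_assignmentsD(3)[OF Bm \<open>s' \<in> S\<close>]
      by (cases "s' = s") (simp_all add: B_def sum.distrib sum_distrib_left[symmetric])
  qed
  have "overload S L B c i = ?e i + \<delta> * L s * E i" for i
    using \<open>finite S\<close> \<open>s \<in> S\<close> by (simp add: overload_def B_def sum.distrib if_distrib[where f="\<lambda>x. _ * x"]
        sum.delta' algebra_simps cong: if_cong)
  then have "(\<Sum>i\<in>J. (overload S L B c i)\<^sup>2) = (\<Sum>i\<in>J. (?e i)\<^sup>2) + 2 * (\<delta> * L s) * (?e j' - ?e j + \<delta> * L s)"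
    using sum_power2_transfer[OF \<open>finite J\<close> _ _ \<open>j \<noteq> j'\<close>, of ?e "\<delta> * L s"] \<open>W s \<subseteq> J\<close> j j'
    by (auto simp: E_def)
  also have "\<dots> < (\<Sum>i\<in>J. (?e i)\<^sup>2)"
    using \<open>2 * (\<delta> * L s) \<le> ?e j - ?e j'\<close> gap \<open>0 < \<delta>\<close> \<open>0 < L s\<close> by (simp add: mult_pos_neg)
  finally show False using min[OF \<open>B \<in> fractional_assignments S W R\<close>] by simp
qed

lemma fractional_assignment_or_violated_cut:
  fixes L :: "'s \<Rightarrow> real" and c :: "'j \<Rightarrow> real"
  assumes "finite S" "finite J" and W: "\<And>s. s \<in> S \<Longrightarrow> W s \<subseteq> J"
    and R: "\<And>s. s \<in> S \<Longrightarrow> R s \<le> card (W s)" and L: "\<And>s. s \<in> S \<Longrightarrow> 0 \<le> L s"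
  shows "(\<exists>B\<in>fractional_assignments S W R. \<forall>j\<in>J. overload S L B c j \<le> 0)
    \<or> (\<exists>T\<subseteq>J. sum c T < (\<Sum>s\<in>S. L s * max 0 (real (R s) - real (card (W s - T)))))"
proof -
  have fin_W: "finite (W s)" if "s \<in> S" for s
    using W[OF that] \<open>finite J\<close> finite_subset by blast
  have "\<exists>Bm\<in>fractional_assignments S W R. \<forall>B\<in>fractional_assignments S W R.
      (\<Sum>i\<in>J. (overload S L Bm c i)\<^sup>2) \<le> (\<Sum>i\<in>J. (overload S L B c i)\<^sup>2)"
  proof (rule continuous_attains_inf[OF compact_fractional_assignments fractional_assignments_nonempty])
    show "continuous_on (fractional_assignments S W R) (\<lambda>B. \<Sum>i\<in>J. (overload S L B c i)\<^sup>2)"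
      unfolding overload_def
      by (intro continuous_intros continuous_on_subset[OF continuous_on_product_coordinates subset_UNIV])
  qed (use fin_W R in auto)
  then obtain Bm where Bm: "Bm \<in> fractional_assignments S W R"
    and min: "\<And>B. B \<in> fractional_assignments S W R \<Longrightarrow>
      (\<Sum>i\<in>J. (overload S L Bm c i)\<^sup>2) \<le> (\<Sum>i\<in>J. (overload S L B c i)\<^sup>2)"
    by blast
  let ?e = "overload S L Bm c"
  show ?thesis
  proof (cases "\<forall>j\<in>J. ?e j \<le> 0")
    case True
    then show ?thesis using Bm by blast
  next
    case False
    define T where "T = {j\<in>J. 0 < ?e j}"
    have "finite T" "T \<noteq> {}" using \<open>finite J\<close> False by (auto simp: T_def)
    have class_bound: "(\<Sum>j\<in>T. Bm (s, j)) \<le> max 0 (real (R s) - real (card (W s - T)))"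
      if "s \<in> S" "0 < L s" for s
    proof -
      have "(\<Sum>j\<in>T. Bm (s, j)) = (\<Sum>j\<in>W s \<inter> T. Bm (s, j))"
        using fractional_assignmentsD(2)[OF Bm] \<open>finite T\<close> by (intro sum.mono_neutral_right) auto
      also have "\<dots> \<le> max 0 (real (R s) - real (card (W s - T)))"
      proof (cases "\<exists>j\<in>W s \<inter> T. 0 < Bm (s, j)")
        case True
        then obtain j where j: "j \<in> W s" "j \<in> T" "0 < Bm (s, j)" by blast
        \<comment> \<open>Class s feeds an overloaded slot, so by optimality it saturates every other slot of its window.\<close>
        have "Bm (s, j') = 1" if j': "j' \<in> W s - T" for j'
        proof (rule ccontr)
          assume "Bm (s, j') \<noteq> 1"
          then have "Bm (s, j') < 1" using fractional_assignmentsD(1)[OF Bm \<open>s \<in> S\<close>] j' by force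
          then have "?e j \<le> ?e j'"
            using overload_le_at_minimizer[OF \<open>finite S\<close> \<open>finite J\<close> \<open>s \<in> S\<close> W[OF \<open>s \<in> S\<close>]
                Bm min j(1) _ \<open>0 < L s\<close> j(3)] j'
            by blast
          then show False using j(2) j' W[OF \<open>s \<in> S\<close>] by (auto simp: T_def)
        qed
        then have "(\<Sum>j\<in>W s - T. Bm (s, j)) = real (card (W s - T))" by simp
        then have "real (R s) = (\<Sum>j\<in>W s \<inter> T. Bm (s, j)) + real (card (W s - T))"
          using fractional_assignmentsD(3)[OF Bm \<open>s \<in> S\<close>] sum.Int_Diff[OF fin_W[OF \<open>s \<in> S\<close>], of "\<lambda>j. Bm (s, j)" T]
          by linarith
        then show ?thesis by simp
      next
        case False
        then have "(\<Sum>j\<in>W s \<inter> T. Bm (s, j)) = 0"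
          using fractional_assignmentsD(1)[OF Bm \<open>s \<in> S\<close>] by (intro sum.neutral) force
        then show ?thesis by simp
      qed
      finally show ?thesis .
    qed
    have "sum c T < (\<Sum>j\<in>T. \<Sum>s\<in>S. L s * Bm (s, j))"
      using \<open>finite T\<close> \<open>T \<noteq> {}\<close> by (intro sum_strict_mono) (auto simp: T_def overload_def)
    also have "\<dots> = (\<Sum>s\<in>S. L s * (\<Sum>j\<in>T. Bm (s, j)))"
      by (subst sum.swap) (simp add: sum_distrib_left)
    also have "\<dots> \<le> (\<Sum>s\<in>S. L s * max 0 (real (R s) - real (card (W s - T))))"
    proof (rule sum_mono)
      fix s assume "s \<in> S"
      then show "L s * (\<Sum>j\<in>T. Bm (s, j)) \<le> L s * max 0 (real (R s) - real (card (W s - T)))"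
        using L[of s] class_bound[of s] by (cases "L s = 0") (auto intro: mult_left_mono)
    qed
    finally have "sum c T < (\<Sum>s\<in>S. L s * max 0 (real (R s) - real (card (W s - T))))" .
    moreover have "T \<subseteq> J" by (simp add: T_def)
    ultimately show ?thesis by blast
  qed
qed

section \<open>The continuum of consumers\<close>

lemma space_unitI [simp]: "space unitI = {0..1}"
  by (simp add: unitI_def space_restrict_space)

locale slot_allocation =
  fixes n nu :: nat and N :: "nat \<Rightarrow> nat" and h :: "nat \<Rightarrow> nat"
    and l :: "real \<Rightarrow> real" and r a d :: "real \<Rightarrow> nat"
  assumes N_0: "N 0 = 0" and N_strict_mono: "\<And>\<kappa>. \<kappa> < nu \<Longrightarrow> N \<kappa> < N (Suc \<kappa>)"
    and N_nu: "N nu = n"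
    and h_block_monotone: "block_monotone N nu h"
    and l_measurable: "l \<in> borel_measurable unitI"
    and r_measurable: "r \<in> measurable unitI (count_space UNIV)"
    and a_measurable: "a \<in> measurable unitI (count_space UNIV)"
    and d_measurable: "d \<in> measurable unitI (count_space UNIV)"
    and l_nonneg: "\<And>x. x \<in> {0..1} \<Longrightarrow> 0 \<le> l x"
    and services: "\<And>x. x \<in> {0..1} \<Longrightarrow> in_services N nu (r x, a x, d x)"
    and integrable_l_r: "integrable unitI (\<lambda>x. l x * real (r x))"
begin

lemma mono_on_N: "mono_on {..nu} N"
proof (rule mono_onI)
  fix i j assume "i \<in> {..nu}" "j \<in> {..nu}" "i \<le> j"
  show "N i \<le> N j"
  proof (rule lift_Suc_mono_le_ivl[where N="{..<nu}" and f=N])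
    show "N k \<le> N (Suc k)" if "k \<in> {..<nu}" for k
      using N_strict_mono[of k] that by simp
  qed (use \<open>j \<in> {..nu}\<close> \<open>i \<le> j\<close> in auto)
qed

lemma slots_below_N: "i \<le> nu \<Longrightarrow> {m + 1..N i} \<subseteq> {1..n}"
  using mono_onD[OF mono_on_N, of i nu] N_nu by auto

lemma service_bounds:
  "x \<in> {0..1} \<Longrightarrow> a x < d x \<and> d x \<le> nu \<and> 0 < r x \<and> r x \<le> N (d x) - N (a x)"
  using services by (simp add: in_services_def)

lemma sum_window_blocks:
  fixes f :: "nat \<Rightarrow> 'b::comm_monoid_add"
  assumes "x \<in> {0..1}"
  shows "sum f ({N (a x) + 1..N (d x)} \<inter> X) = (\<Sum>\<kappa>=a x+1..d x. sum f ({N (\<kappa> - 1) + 1..N \<kappa>} \<inter> X))"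
  using service_bounds[OF assms] by (intro sum_blocks mono_on_subset[OF mono_on_N]) auto

lemma integrable_l: "integrable unitI l"
proof (rule Bochner_Integration.integrable_bound[OF integrable_l_r l_measurable AE_I2])
  fix x assume "x \<in> space unitI"
  then have "0 \<le> l x" "1 \<le> real (r x)" using l_nonneg service_bounds by (auto simp: Suc_le_eq)
  then show "norm (l x) \<le> norm (l x * real (r x))"
    using mult_left_mono[of 1 "real (r x)" "l x"] by simp
qed

lemma unmet_demand_le_tail_load:
  fixes \<alpha> :: "nat \<Rightarrow> real" and k :: "nat \<Rightarrow> nat"
  assumes x: "x \<in> {0..1}"
    and \<alpha>_bounds: "\<And>j. j \<in> {1..n} \<Longrightarrow> 0 \<le> \<alpha> j \<and> \<alpha> j \<le> 1"
    and \<alpha>_window: "\<And>j. j \<in> {1..n} \<Longrightarrow> j \<notin> {N (a x) + 1..N (d x)} \<Longrightarrow> \<alpha> j = 0"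
    and \<alpha>_sum: "(\<Sum>j=1..n. \<alpha> j) = real (r x)"
    and k: "\<forall>\<kappa>\<in>{1..nu}. k \<kappa> \<le> N \<kappa> - N (\<kappa> - 1)"
  shows "max 0 (real (r x) - real (\<Sum>\<kappa>=a x+1..d x. k \<kappa>))
    \<le> (\<Sum>\<kappa>=1..nu. \<Sum>j=N (\<kappa> - 1) + k \<kappa> + 1..N \<kappa>. \<alpha> j)"
proof -
  have ad: "a x < d x" "d x \<le> nu" using service_bounds[OF x] by auto
  have tail_nonneg: "0 \<le> (\<Sum>j=N (\<kappa> - 1) + k \<kappa> + 1..N \<kappa>. \<alpha> j)" if "\<kappa> \<le> nu" for \<kappa>
    using \<alpha>_bounds slots_below_N[OF that] by (intro sum_nonneg) blast
  have block: "(\<Sum>j=N (\<kappa> - 1) + 1..N \<kappa>. \<alpha> j) \<le> real (k \<kappa>) + (\<Sum>j=N (\<kappa> - 1) + k \<kappa> + 1..N \<kappa>. \<alpha> j)"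
    if "\<kappa> \<in> {1..nu}" for \<kappa>
  proof -
    have "N (\<kappa> - 1) \<le> N \<kappa>" using that by (intro mono_onD[OF mono_on_N]) auto
    then have "N (\<kappa> - 1) + k \<kappa> \<le> N \<kappa>" using k that by force
    then have "{N (\<kappa> - 1) + 1..N \<kappa>} = {N (\<kappa> - 1) + 1..N (\<kappa> - 1) + k \<kappa>} \<union> {N (\<kappa> - 1) + k \<kappa> + 1..N \<kappa>}"
      by auto
    then have "(\<Sum>j=N (\<kappa> - 1) + 1..N \<kappa>. \<alpha> j)
        = (\<Sum>j=N (\<kappa> - 1) + 1..N (\<kappa> - 1) + k \<kappa>. \<alpha> j) + (\<Sum>j=N (\<kappa> - 1) + k \<kappa> + 1..N \<kappa>. \<alpha> j)"
      by (simp add: sum.union_disjoint)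
    moreover have "(\<Sum>j=N (\<kappa> - 1) + 1..N (\<kappa> - 1) + k \<kappa>. \<alpha> j) \<le> (\<Sum>j=N (\<kappa> - 1) + 1..N (\<kappa> - 1) + k \<kappa>. 1)"
      using \<alpha>_bounds slots_below_N[of \<kappa> "N (\<kappa> - 1)"] that \<open>N (\<kappa> - 1) + k \<kappa> \<le> N \<kappa>\<close>
      by (intro sum_mono) (auto simp: subset_iff)
    ultimately show ?thesis by simp
  qed
  have "real (r x) = (\<Sum>j\<in>{N (a x) + 1..N (d x)}. \<alpha> j)"
    unfolding \<alpha>_sum[symmetric]
    using slots_below_N[OF ad(2)] \<alpha>_window by (intro sum.mono_neutral_right) auto
  also have "\<dots> = (\<Sum>\<kappa>=a x+1..d x. \<Sum>j=N (\<kappa> - 1) + 1..N \<kappa>. \<alpha> j)"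
    using sum_window_blocks[OF x, of \<alpha> UNIV] by simp
  also have "\<dots> \<le> (\<Sum>\<kappa>=a x+1..d x. real (k \<kappa>) + (\<Sum>j=N (\<kappa> - 1) + k \<kappa> + 1..N \<kappa>. \<alpha> j))"
    using ad by (intro sum_mono block) auto
  also have "\<dots> \<le> real (\<Sum>\<kappa>=a x+1..d x. k \<kappa>) + (\<Sum>\<kappa>=1..nu. \<Sum>j=N (\<kappa> - 1) + k \<kappa> + 1..N \<kappa>. \<alpha> j)"
    unfolding sum.distrib of_nat_sum using ad tail_nonneg by (intro add_left_mono sum_mono2) auto
  moreover have "0 \<le> (\<Sum>\<kappa>=1..nu. \<Sum>j=N (\<kappa> - 1) + k \<kappa> + 1..N \<kappa>. \<alpha> j)"
    by (rule sum_nonneg, rule tail_nonneg) simp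
  ultimately show ?thesis by simp
qed

lemma adequate_imp_Wc_nonneg:
  assumes "adequate N n h l r a d" and k: "\<forall>\<kappa>\<in>{1..nu}. k \<kappa> \<le> N \<kappa> - N (\<kappa> - 1)"
  shows "0 \<le> Wc N nu k h l r a d"
proof -
  obtain A where A_meas: "(\<lambda>(x, j). A x j) \<in> borel_measurable (unitI \<Otimes>\<^sub>M count_space {1..n})"
    and A_bounds: "\<forall>x\<in>{0..1}. \<forall>j\<in>{1..n}. 0 \<le> A x j \<and> A x j \<le> 1"
    and A_window: "\<forall>x\<in>{0..1}. \<forall>j\<in>{1..n}. j \<notin> {N (a x) + 1 .. N (d x)} \<longrightarrow> A x j = 0"
    and A_sum: "\<forall>x\<in>{0..1}. (\<Sum>j=1..n. A x j) = real (r x)"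
    and A_capacity: "\<forall>j\<in>{1..n}. (\<integral>x. l x * A x j \<partial>unitI) \<le> real (h j)"
    using assms(1) unfolding adequate_def by blast
  define tail where "tail \<kappa> = {N (\<kappa> - 1) + k \<kappa> + 1..N \<kappa>}" for \<kappa>
  have tail_slots: "tail \<kappa> \<subseteq> {1..n}" if "\<kappa> \<in> {1..nu}" for \<kappa>
    using slots_below_N that by (simp add: tail_def)
  have integrable_lA: "integrable unitI (\<lambda>x. l x * A x j)" if j: "j \<in> {1..n}" for j
  proof (rule Bochner_Integration.integrable_bound[OF integrable_l _ AE_I2])
    have "(\<lambda>x. (x, j)) \<in> unitI \<rightarrow>\<^sub>M unitI \<Otimes>\<^sub>M count_space {1..n}"
      using j by (intro measurable_Pair measurable_ident_sets measurable_const) auto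
    from measurable_comp[OF this A_meas] show "(\<lambda>x. l x * A x j) \<in> borel_measurable unitI"
      using l_measurable by (simp add: comp_def)
    fix x assume "x \<in> space unitI"
    then show "norm (l x * A x j) \<le> norm (l x)"
      using A_bounds j l_nonneg[of x] by (simp add: abs_mult mult_left_le)
  qed
  have "(\<integral>x. l x * max 0 (real (r x) - real (\<Sum>\<kappa> = a x + 1..d x. k \<kappa>)) \<partial>unitI)
      \<le> (\<integral>x. (\<Sum>\<kappa>=1..nu. \<Sum>j\<in>tail \<kappa>. l x * A x j) \<partial>unitI)"
  proof (rule integral_mono')
    show "integrable unitI (\<lambda>x. \<Sum>\<kappa>=1..nu. \<Sum>j\<in>tail \<kappa>. l x * A x j)"
      using tail_slots integrable_lA by (intro Bochner_Integration.integrable_sum) blast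
    fix x assume "x \<in> space unitI"
    then have x: "x \<in> {0..1}" by simp
    have "max 0 (real (r x) - real (\<Sum>\<kappa> = a x + 1..d x. k \<kappa>)) \<le> (\<Sum>\<kappa>=1..nu. \<Sum>j\<in>tail \<kappa>. A x j)"
      unfolding tail_def using A_bounds A_window A_sum x k by (intro unmet_demand_le_tail_load) auto
    from mult_left_mono[OF this l_nonneg[OF x]]
    show "l x * max 0 (real (r x) - real (\<Sum>\<kappa> = a x + 1..d x. k \<kappa>)) \<le> (\<Sum>\<kappa>=1..nu. \<Sum>j\<in>tail \<kappa>. l x * A x j)"
      by (simp add: sum_distrib_left)
    show "0 \<le> (\<Sum>\<kappa>=1..nu. \<Sum>j\<in>tail \<kappa>. l x * A x j)"
      using tail_slots A_bounds x l_nonneg[OF x] by (intro sum_nonneg) (blast intro: mult_nonneg_nonneg)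
  qed
  also have "\<dots> = (\<Sum>\<kappa>=1..nu. \<integral>x. (\<Sum>j\<in>tail \<kappa>. l x * A x j) \<partial>unitI)"
    using tail_slots integrable_lA
    by (intro Bochner_Integration.integral_sum Bochner_Integration.integrable_sum) blast
  also have "\<dots> = (\<Sum>\<kappa>=1..nu. \<Sum>j\<in>tail \<kappa>. \<integral>x. l x * A x j \<partial>unitI)"
    using tail_slots integrable_lA by (intro sum.cong refl Bochner_Integration.integral_sum) blast
  also have "\<dots> \<le> (\<Sum>\<kappa>=1..nu. \<Sum>j\<in>tail \<kappa>. real (h j))"
    using tail_slots A_capacity by (intro sum_mono) blast
  finally show ?thesis by (simp add: Wc_def tail_def)
qed

definition demand :: "real \<Rightarrow> nat \<times> nat \<times> nat" where
  "demand x = (r x, a x, d x)"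

definition demands :: "(nat \<times> nat \<times> nat) set" where
  "demands = demand ` {0..1}"

definition window :: "nat \<times> nat \<times> nat \<Rightarrow> nat set" where
  "window s = {N (fst (snd s)) + 1..N (snd (snd s))}"

definition mass :: "nat \<times> nat \<times> nat \<Rightarrow> real" where
  "mass s = (\<integral>x. l x * of_bool (demand x = s) \<partial>unitI)"

lemma window_demand [simp]: "window (demand x) = {N (a x) + 1..N (d x)}"
  by (simp add: window_def demand_def)

lemma demandsE:
  assumes "s \<in> demands"
  obtains x where "x \<in> {0..1}" "s = demand x"
  using assms by (auto simp: demands_def)

lemma finite_demands: "finite demands"
proof (rule finite_subset)
  show "demands \<subseteq> {0..n} \<times> {0..nu} \<times> {0..nu}"
    using service_bounds slots_below_N mono_onD[OF mono_on_N, of _ nu] N_nu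
    by (fastforce simp: demands_def demand_def)
qed simp

lemma window_subset_slots: "s \<in> demands \<Longrightarrow> window s \<subseteq> {1..n}"
  by (elim demandsE) (use service_bounds slots_below_N in simp)

lemma demand_le_card_window: "s \<in> demands \<Longrightarrow> fst s \<le> card (window s)"
  by (elim demandsE) (use service_bounds in \<open>simp add: demand_def window_def\<close>)

lemma measurable_demand: "demand \<in> unitI \<rightarrow>\<^sub>M count_space UNIV"
proof -
  have "demand \<in> unitI \<rightarrow>\<^sub>M count_space UNIV \<Otimes>\<^sub>M (count_space UNIV \<Otimes>\<^sub>M count_space UNIV)"
    unfolding demand_def[abs_def] using r_measurable a_measurable d_measurable
    by (intro measurable_Pair) auto
  then show ?thesis by (simp add: pair_measure_countable)
qed

lemma mass_nonneg: "0 \<le> mass s"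
  unfolding mass_def using l_nonneg by (intro integral_nonneg_AE AE_I2) simp

lemma integral_demand_sum:
  "(\<integral>x. l x * g (demand x) \<partial>unitI) = (\<Sum>s\<in>demands. g s * mass s)"
proof -
  have integrable: "integrable unitI (\<lambda>x. l x * of_bool (demand x = s))" for s
  proof (rule Bochner_Integration.integrable_bound[OF integrable_l _ AE_I2])
    show "(\<lambda>x. l x * of_bool (demand x = s)) \<in> borel_measurable unitI"
      using l_measurable measurable_comp[OF measurable_demand, of "\<lambda>t. of_bool (t = s)" borel]
      by (intro borel_measurable_times) (auto simp: comp_def)
  qed simp
  have "(\<integral>x. l x * g (demand x) \<partial>unitI)
      = (\<integral>x. (\<Sum>s\<in>demands. g s * (l x * of_bool (demand x = s))) \<partial>unitI)"
  proof (rule Bochner_Integration.integral_cong[OF refl])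
    fix x assume "x \<in> space unitI"
    then have "demand x \<in> demands" by (simp add: demands_def)
    then show "l x * g (demand x) = (\<Sum>s\<in>demands. g s * (l x * of_bool (demand x = s)))"
      using finite_demands by (simp add: of_bool_def if_distrib sum.delta' cong: if_cong)
  qed
  also have "\<dots> = (\<Sum>s\<in>demands. g s * mass s)"
    using integrable by (simp add: mass_def)
  finally show ?thesis .
qed

lemma adequate_if_assignment_within_capacity:
  assumes B: "B \<in> fractional_assignments demands window fst"
    and capacity: "\<forall>j\<in>{1..n}. overload demands mass B (\<lambda>j. real (h j)) j \<le> 0"
  shows "adequate N n h l r a d"
proof -
  let ?A = "\<lambda>x j. B (demand x, j)"
  have "(\<lambda>p. (demand (fst p), snd p)) \<in> unitI \<Otimes>\<^sub>M count_space {1..n} \<rightarrow>\<^sub>M count_space UNIV \<Otimes>\<^sub>M count_space {1..n}"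
    by (intro measurable_Pair measurable_comp[OF measurable_fst measurable_demand, unfolded comp_def]
        measurable_snd)
  then have "(\<lambda>p. (demand (fst p), snd p)) \<in> unitI \<Otimes>\<^sub>M count_space {1..n} \<rightarrow>\<^sub>M count_space (UNIV \<times> {1..n})"
    by (simp add: pair_measure_countable)
  from measurable_comp[OF this, of B borel]
  have measurable: "(\<lambda>(x, j). ?A x j) \<in> borel_measurable (unitI \<Otimes>\<^sub>M count_space {1..n})"
    by (simp add: comp_def case_prod_beta)
  have demand_in: "demand x \<in> demands" if "x \<in> {0..1}" for x
    using that by (simp add: demands_def)
  have bounds: "\<forall>x\<in>{0..1}. \<forall>j\<in>{1..n}. 0 \<le> ?A x j \<and> ?A x j \<le> 1"
    using fractional_assignmentsD(1,2)[OF B] demand_in by (metis order_refl zero_le_one)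
  have outside: "\<forall>x\<in>{0..1}. \<forall>j\<in>{1..n}. j \<notin> {N (a x) + 1..N (d x)} \<longrightarrow> ?A x j = 0"
    using fractional_assignmentsD(2)[OF B] by simp
  have total: "\<forall>x\<in>{0..1}. (\<Sum>j=1..n. ?A x j) = real (r x)"
  proof
    fix x :: real assume "x \<in> {0..1}"
    then have "(\<Sum>j=1..n. ?A x j) = (\<Sum>j\<in>window (demand x). ?A x j)"
      using fractional_assignmentsD(2)[OF B] window_subset_slots[OF demand_in]
      by (intro sum.mono_neutral_right) auto
    also have "\<dots> = real (r x)"
      using fractional_assignmentsD(3)[OF B demand_in[OF \<open>x \<in> {0..1}\<close>]] by (simp add: demand_def)
    finally show "(\<Sum>j=1..n. ?A x j) = real (r x)" .
  qed
  have load: "\<forall>j\<in>{1..n}. (\<integral>x. l x * ?A x j \<partial>unitI) \<le> real (h j)"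
    using capacity integral_demand_sum[of "\<lambda>s. B (s, _)"] by (simp add: overload_def mult.commute)
  show ?thesis
    unfolding adequate_def by (intro exI[of _ ?A] conjI measurable bounds outside total load)
qed

lemma tail_capacity_le_cut:
  assumes "T \<subseteq> {1..n}"
  shows "(\<Sum>\<kappa>=1..nu. \<Sum>j=N (\<kappa> - 1) + card ({N (\<kappa> - 1) + 1..N \<kappa>} - T) + 1..N \<kappa>. real (h j))
    \<le> (\<Sum>j\<in>T. real (h j))"
proof -
  have split: "(\<Sum>j\<in>T. real (h j)) = (\<Sum>\<kappa>=1..nu. \<Sum>j\<in>{N (\<kappa> - 1) + 1..N \<kappa>} \<inter> T. real (h j))"
    using sum_blocks[OF _ mono_on_subset[OF mono_on_N], of 0 nu "\<lambda>j. real (h j)" T] assms N_0 N_nu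
    by (simp add: Int_absorb1)
  have per_block: "(\<Sum>j=N (\<kappa> - 1) + card ({N (\<kappa> - 1) + 1..N \<kappa>} - T) + 1..N \<kappa>. real (h j))
      \<le> (\<Sum>j\<in>{N (\<kappa> - 1) + 1..N \<kappa>} \<inter> T. real (h j))" if \<kappa>: "\<kappa> \<in> {1..nu}" for \<kappa>
  proof -
    let ?U = "{N (\<kappa> - 1) + 1..N \<kappa>} \<inter> T"
    have "N (\<kappa> - 1) \<le> N \<kappa>" using \<kappa> by (intro mono_onD[OF mono_on_N]) auto
    moreover have "card ?U + card ({N (\<kappa> - 1) + 1..N \<kappa>} - T) = N \<kappa> - N (\<kappa> - 1)"
      using card_Int_Diff[of "{N (\<kappa> - 1) + 1..N \<kappa>}" T] by simp
    ultimately have "N (\<kappa> - 1) + card ({N (\<kappa> - 1) + 1..N \<kappa>} - T) = N \<kappa> - card ?U"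
      by linarith
    moreover have "(\<Sum>j=N \<kappa> - card ?U + 1..N \<kappa>. real (h j)) \<le> (\<Sum>j\<in>?U. real (h j))"
      using h_block_monotone \<kappa> unfolding block_monotone_def
      by (intro sum_top_le_sum_subset[where p="N (\<kappa> - 1)"]) auto
    ultimately show ?thesis by simp
  qed
  then have "(\<Sum>\<kappa>=1..nu. \<Sum>j=N (\<kappa> - 1) + card ({N (\<kappa> - 1) + 1..N \<kappa>} - T) + 1..N \<kappa>. real (h j))
      \<le> (\<Sum>\<kappa>=1..nu. \<Sum>j\<in>{N (\<kappa> - 1) + 1..N \<kappa>} \<inter> T. real (h j))"
    by (rule sum_mono)
  with split show ?thesis by simp
qed

lemma integral_unmet_demand_eq_cut:
  "(\<integral>x. l x * max 0 (real (r x) - real (\<Sum>\<kappa>=a x+1..d x. card ({N (\<kappa> - 1) + 1..N \<kappa>} - T))) \<partial>unitI)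
    = (\<Sum>s\<in>demands. mass s * max 0 (real (fst s) - real (card (window s - T))))"
proof -
  have "card (window (demand x) - T) = (\<Sum>\<kappa>=a x+1..d x. card ({N (\<kappa> - 1) + 1..N \<kappa>} - T))"
    if "x \<in> {0..1}" for x
    using sum_window_blocks[OF that, of "\<lambda>_. 1::nat" "- T"] by (simp add: Diff_eq)
  then have "(\<integral>x. l x * max 0 (real (r x) - real (\<Sum>\<kappa>=a x+1..d x. card ({N (\<kappa> - 1) + 1..N \<kappa>} - T))) \<partial>unitI)
      = (\<integral>x. l x * max 0 (real (fst (demand x)) - real (card (window (demand x) - T))) \<partial>unitI)"
    by (intro Bochner_Integration.integral_cong) (auto simp: demand_def)
  also have "\<dots> = (\<Sum>s\<in>demands. mass s * max 0 (real (fst s) - real (card (window s - T))))"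
    using integral_demand_sum[of "\<lambda>s. max 0 (real (fst s) - real (card (window s - T)))"]
    by (simp add: mult.commute)
  finally show ?thesis .
qed

lemma Wc_nonneg_imp_adequate:
  assumes Wc_nonneg: "\<forall>k. (\<forall>\<kappa>\<in>{1..nu}. k \<kappa> \<le> N \<kappa> - N (\<kappa> - 1)) \<longrightarrow> 0 \<le> Wc N nu k h l r a d"
  shows "adequate N n h l r a d"
  using fractional_assignment_or_violated_cut[OF finite_demands finite_atLeastAtMost window_subset_slots
      demand_le_card_window mass_nonneg, where c = "\<lambda>j. real (h j)"]
proof
  assume "\<exists>B\<in>fractional_assignments demands window fst.
    \<forall>j\<in>{1..n}. overload demands mass B (\<lambda>j. real (h j)) j \<le> 0"
  then show ?thesis by (blast intro: adequate_if_assignment_within_capacity)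
next
  assume "\<exists>T\<subseteq>{1..n}. (\<Sum>j\<in>T. real (h j))
    < (\<Sum>s\<in>demands. mass s * max 0 (real (fst s) - real (card (window s - T))))"
  then obtain T where "T \<subseteq> {1..n}"
    and violated: "(\<Sum>j\<in>T. real (h j))
      < (\<Sum>s\<in>demands. mass s * max 0 (real (fst s) - real (card (window s - T))))"
    by blast
  define k where "k \<kappa> = card ({N (\<kappa> - 1) + 1..N \<kappa>} - T)" for \<kappa>
  have "k \<kappa> \<le> N \<kappa> - N (\<kappa> - 1)" for \<kappa>
    using card_mono[of "{N (\<kappa> - 1) + 1..N \<kappa>}" "{N (\<kappa> - 1) + 1..N \<kappa>} - T"] by (simp add: k_def)
  moreover have "Wc N nu k h l r a d < 0"
    using tail_capacity_le_cut[OF \<open>T \<subseteq> {1..n}\<close>] integral_unmet_demand_eq_cut[of T] violated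
    by (simp add: Wc_def k_def)
  ultimately have False using Wc_nonneg by (meson not_le)
  then show ?thesis ..
qed

end

theorem theorem2:
  fixes n nu :: nat and N :: "nat \<Rightarrow> nat" and h :: "nat \<Rightarrow> nat"
    and l :: "real \<Rightarrow> real" and r a d :: "real \<Rightarrow> nat"
  assumes "1 \<le> nu" and "nu \<le> n"
    and "N 0 = 0" and "\<And>\<kappa>. \<kappa> < nu \<Longrightarrow> N \<kappa> < N (Suc \<kappa>)" and "N nu = n"
    and "block_monotone N nu h"
    and "l \<in> borel_measurable unitI"
    and "r \<in> measurable unitI (count_space UNIV)"
    and "a \<in> measurable unitI (count_space UNIV)"
    and "d \<in> measurable unitI (count_space UNIV)"
    and "\<And>x. x \<in> {0..1} \<Longrightarrow> 0 \<le> l x"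
    and "\<And>x. x \<in> {0..1} \<Longrightarrow> in_services N nu (r x, a x, d x)"
    and "integrable unitI (\<lambda>x. l x * real (r x))"
  shows "adequate N n h l r a d \<longleftrightarrow>
    (\<forall>k :: nat \<Rightarrow> nat. (\<forall>\<kappa>\<in>{1..nu}. k \<kappa> \<le> N \<kappa> - N (\<kappa> - 1))
        \<longrightarrow> Wc N nu k h l r a d \<ge> 0)"
proof -
  interpret slot_allocation n nu N h l r a d
    using assms(3-13) by unfold_locales
  show ?thesis
    using adequate_imp_Wc_nonneg Wc_nonneg_imp_adequate by blast
qed

end
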